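(* Consider the following communication system. A $k$-bit binary information sequence is CRC-encoded with degree-$m$ generator polynomial $p(x)$ into an $n=k+m$ bit sequence divisible by $p(x)$, which (with $v$ zero termination bits) is encoded by a feedforward rate-$1/N$ convolutional code with $v$ memory elements and sent by QPSK over an AWGN channel with symbol SNR $\gamma_s=E_s/N_0$. The receiver uses serial list Viterbi decoding (S-LVA): codewords are output in order of increasing soft Viterbi metric relative to the received sequence, and decoding stops at the first codeword whose input sequence is divisible by $p(x)$. Let $N_{\mathrm{LVA}}$ be the index of the decoding trial at which the CRC check first passes, and for a list size $L$ let $P^{L}_{\mathrm{NACK}}=\Pr\{N_{\mathrm{LVA}}>L\}$ be the erasure probability (no codeword among the first $L$ passes the CRC). Then, as $\gamma_s\to\infty$, $P^{L}_{\mathrm{NACK}}\le \frac{1}{L}$ (i.e., $\limsup_{\gamma_s\to\infty}P^L_{\mathrm{NACK}}\le 1/L$).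
   Context: $\gamma_s$ is measured in dB; $\gamma_s\to\infty$ means the SNR tends to infinity. Probabilities are over the channel noise. *)

theory Defs
  imports "HOL-Probability.Probability" "HOL-Library.Z2" "HOL-Computational_Algebra.Polynomial"
begin

text \<open>Binary sequences are polynomials over GF(2) (type bit poly); the bit at time t is coeff w t.\<close>

definition bit_seqs :: "nat \<Rightarrow> bit poly set" where
  "bit_seqs n = {w. \<forall>i\<ge>n. coeff w i = 0}"

definition crc_encode :: "bit poly \<Rightarrow> nat \<Rightarrow> bit poly \<Rightarrow> bit poly" where
  "crc_encode p m d = d * monom 1 m - (d * monom 1 m) mod p"

text \<open>Feedforward rate 1/N convolutional encoder with generator polynomials g 0, ..., g (N-1)
  (degree at most v, i.e. v memory elements).  The input is the n-bit sequence w followed by v zero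
  termination bits; branch j outputs the n+v bits of w(x) g_j(x).\<close>
definition coded_index :: "nat \<Rightarrow> nat \<Rightarrow> nat \<Rightarrow> (nat \<times> nat) set" where
  "coded_index n v N = {..<n+v} \<times> {..<N}"

definition conv_bit :: "(nat \<Rightarrow> bit poly) \<Rightarrow> bit poly \<Rightarrow> nat \<times> nat \<Rightarrow> bit" where
  "conv_bit g w tj = coeff (w * g (snd tj)) (fst tj)"

definition snr_lin :: "real \<Rightarrow> real" where
  "snr_lin gdB = 10 powr (gdB / 10)"

text \<open>Gray-mapped QPSK with N0 = 1 and Es = snr: each coded bit is carried by one real dimension
  (in-phase or quadrature) with amplitude +- sqrt(Es/2); bit 0 maps to +, bit 1 to -.\<close>
definition modulate :: "real \<Rightarrow> (nat \<Rightarrow> bit poly) \<Rightarrow> bit poly \<Rightarrow> nat \<times> nat \<Rightarrow> real" where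
  "modulate gdB g w tj = sqrt (snr_lin gdB / 2) * (if conv_bit g w tj = 1 then -1 else 1)"

text \<open>AWGN: independent real Gaussian noise of variance N0/2 = 1/2 in each real dimension.\<close>
definition noise_measure :: "(nat \<times> nat) set \<Rightarrow> (nat \<times> nat \<Rightarrow> real) measure" where
  "noise_measure I = PiM I (\<lambda>_. density lborel (normal_density 0 (sqrt (1/2))))"

definition sv_metric :: "(nat \<times> nat) set \<Rightarrow> (nat \<times> nat \<Rightarrow> real) \<Rightarrow> (nat \<times> nat \<Rightarrow> real) \<Rightarrow> real" where
  "sv_metric I y x = (\<Sum>i\<in>I. (y i - x i)\<^sup>2)"

text \<open>N_LVA > L: the S-LVA lists terminated input sequences in order of increasing metric; the first
  one divisible by p has index 1 + (number of candidates with strictly smaller metric), so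
  N_LVA > L iff at least L candidates have metric strictly smaller than the best CRC-valid one.\<close>
definition nlva_exceeds ::
  "nat \<Rightarrow> nat \<Rightarrow> nat \<Rightarrow> bit poly \<Rightarrow> (nat \<Rightarrow> bit poly) \<Rightarrow> real \<Rightarrow> nat \<Rightarrow> (nat \<times> nat \<Rightarrow> real) \<Rightarrow> bool" where
  "nlva_exceeds n v N p g gdB L y =
     (let I = coded_index n v N;
          best = Min ((\<lambda>w. sv_metric I y (modulate gdB g w)) ` {w \<in> bit_seqs n. p dvd w})
      in L \<le> card {w \<in> bit_seqs n. sv_metric I y (modulate gdB g w) < best})"

definition P_nack ::
  "nat \<Rightarrow> nat \<Rightarrow> nat \<Rightarrow> bit poly \<Rightarrow> (nat \<Rightarrow> bit poly) \<Rightarrow> nat \<Rightarrow> bit poly \<Rightarrow> real \<Rightarrow> real" where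
  "P_nack n v N p g L c gdB =
     (let M = noise_measure (coded_index n v N)
      in measure M {z \<in> space M. nlva_exceeds n v N p g gdB L (\<lambda>i. modulate gdB g c i + z i)})"

end

theory Submission
  imports Defs "HOL-Real_Asymp.Real_Asymp"
begin

text \<open>With antipodal signalling of amplitude \<open>a = sqrt (Es/2)\<close>, if every noise sample is at
  most \<open>a\<close> in absolute value, then the transmitted codeword has the smallest soft metric among
  all candidates. Since it passes the CRC check, no candidate is listed before the best
  CRC-valid one and \<open>N_LVA = 1\<close>. Hence \<open>P_NACK\<close> is at most the probability that some
  Gaussian noise sample exceeds \<open>a\<close>, which tends to 0 as \<open>a \<rightarrow> \<infinity>\<close>. So \<open>P_NACK \<rightarrow> 0\<close>, which
  is stronger than the claimed bound \<open>1/L\<close> and holds for any generator polynomials of the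
  convolutional code.\<close>

lemma finite_bit_seqs: "finite (bit_seqs n)"
proof -
  have "bit_seqs n \<subseteq> Poly ` {xs. length xs = n}"
  proof
    fix w assume "w \<in> bit_seqs n"
    then have "w = Poly (map (coeff w) [0..<n])"
      by (auto simp: poly_eq_iff bit_seqs_def nth_default_def)
    then show "w \<in> Poly ` {xs. length xs = n}" by force
  qed
  moreover have "finite (UNIV :: bit set)"
  proof -
    have "(UNIV :: bit set) = {0, 1}"
      by auto
    then show ?thesis
      by (metis finite.emptyI finite.insertI)
  qed
  then have "finite {xs :: bit list. length xs = n}"
    using finite_lists_length_eq[of "UNIV :: bit set" n] by simp
  ultimately show ?thesis
    by (meson finite_surj)
qed

lemma crc_encode_dvd: "p dvd crc_encode p m d"
proof -
  have "crc_encode p m d = p * (d * monom 1 m div p)"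
    unfolding crc_encode_def by (metis add_diff_cancel_right' div_mult_mod_eq mult.commute)
  then show ?thesis by simp
qed

lemma crc_encode_in_bit_seqs:
  assumes "degree p \<le> m" "d \<in> bit_seqs k"
  shows "crc_encode p m d \<in> bit_seqs (k + m)"
  unfolding bit_seqs_def crc_encode_def
proof (intro CollectI allI impI)
  fix i assume i: "k + m \<le> i"
  have shifted: "coeff (d * monom 1 m) i = 0"
    using i assms(2) by (auto simp: coeff_monom_mult mult.commute[of d] bit_seqs_def)
  have remainder: "coeff ((d * monom 1 m) mod p) i = 0"
  proof (cases "p = 0 \<or> (d * monom 1 m) mod p = 0")
    case True
    then show ?thesis using shifted by auto
  next
    case False
    then have "degree ((d * monom 1 m) mod p) < m"
      using degree_mod_less assms(1) by (metis order_less_le_trans)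
    then show ?thesis using i by (intro coeff_eq_0) auto
  qed
  show "coeff (d * monom 1 m - d * monom 1 m mod p) i = 0"
    using shifted remainder by simp
qed

lemma antipodal_noise_sq_le:
  fixes a z xc xw :: real
  assumes "xc \<in> {a, -a}" "xw \<in> {a, -a}" "\<bar>z\<bar> \<le> a"
  shows "z\<^sup>2 \<le> (xc + z - xw)\<^sup>2"
proof -
  have "(xc + z - xw)\<^sup>2 = z\<^sup>2 + (xc - xw) * (xc - xw + 2 * z)"
    by (simp add: power2_eq_square algebra_simps)
  moreover have "0 \<le> (xc - xw) * (xc - xw + 2 * z)"
    using assms by (auto intro: mult_nonneg_nonneg mult_nonpos_nonpos)
  ultimately show ?thesis by linarith
qed

lemma modulate_antipodal: "modulate gdB g w i \<in> {sqrt (snr_lin gdB / 2), - sqrt (snr_lin gdB / 2)}"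
  by (simp add: modulate_def)

lemma sv_metric_sent_le:
  assumes "\<forall>i\<in>I. \<bar>z i\<bar> \<le> sqrt (snr_lin gdB / 2)"
  shows "sv_metric I (\<lambda>i. modulate gdB g c i + z i) (modulate gdB g c)
           \<le> sv_metric I (\<lambda>i. modulate gdB g c i + z i) (modulate gdB g w)"
  unfolding sv_metric_def
proof (rule sum_mono)
  fix i assume "i \<in> I"
  have "(z i)\<^sup>2 \<le> (modulate gdB g c i + z i - modulate gdB g w i)\<^sup>2"
    using assms \<open>i \<in> I\<close>
    by (intro antipodal_noise_sq_le[OF modulate_antipodal modulate_antipodal]) simp
  then show "(modulate gdB g c i + z i - modulate gdB g c i)\<^sup>2
               \<le> (modulate gdB g c i + z i - modulate gdB g w i)\<^sup>2"
    by simp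
qed

lemma nlva_exceeds_imp_large_noise:
  assumes "c \<in> bit_seqs n" "p dvd c" "L \<ge> 1"
    and "nlva_exceeds n v N p g gdB L (\<lambda>i. modulate gdB g c i + z i)"
  shows "\<exists>i\<in>coded_index n v N. sqrt (snr_lin gdB / 2) < \<bar>z i\<bar>"
proof (rule ccontr)
  define I where "I = coded_index n v N"
  define metric where "metric = (\<lambda>w. sv_metric I (\<lambda>i. modulate gdB g c i + z i) (modulate gdB g w))"
  define best where "best = Min (metric ` {w \<in> bit_seqs n. p dvd w})"
  assume "\<not> ?thesis"
  then have "metric c \<le> metric w" for w
    unfolding metric_def I_def by (intro sv_metric_sent_le) (auto simp: not_less)
  moreover have "best \<le> metric c"
    unfolding best_def using assms(1,2) finite_bit_seqs by simp
  moreover have "L \<le> card {w \<in> bit_seqs n. metric w < best}"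
    using assms(4) by (simp add: nlva_exceeds_def Let_def metric_def best_def I_def)
  then have "card {w \<in> bit_seqs n. metric w < best} \<noteq> 0"
    using assms(3) by linarith
  then obtain w where "metric w < best"
    by (metis (mono_tags, lifting) card.empty empty_Collect_eq)
  ultimately show False
    by (meson less_le_trans not_le)
qed

lemma (in prob_space) tendsto_prob_greater_at_top:
  fixes X :: "'a \<Rightarrow> real"
  assumes X: "random_variable borel X"
  shows "((\<lambda>a. prob {x \<in> space M. a < X x}) \<longlongrightarrow> 0) at_top"
proof -
  have "prob {x \<in> space M. a < X x} = 1 - cdf (distr M borel X) a" for a
  proof -
    have "{x \<in> space M. a < X x} = space M - (X -` {..a} \<inter> space M)" by auto
    then show ?thesis
      using X by (simp add: cdf_def measure_distr prob_compl measurable_sets)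
  qed
  moreover have "((\<lambda>a. 1 - cdf (distr M borel X) a) \<longlongrightarrow> 1 - 1) at_top"
    using real_distribution.cdf_lim_at_top_prob[OF real_distribution_distr[OF X]]
    by (intro tendsto_diff tendsto_const)
  ultimately show ?thesis by simp
qed

lemma prob_space_noise_measure: "prob_space (noise_measure I)"
  unfolding noise_measure_def by (intro prob_space_PiM prob_space_normal_density) auto

lemma filterlim_sqrt_snr_lin_at_top: "filterlim (\<lambda>gdB. sqrt (snr_lin gdB / 2)) at_top at_top"
  unfolding snr_lin_def by real_asymp

lemma P_nack_tendsto_zero:
  assumes "c \<in> bit_seqs n" "p dvd c" "L \<ge> 1"
  shows "((\<lambda>gdB. P_nack n v N p g L c gdB) \<longlongrightarrow> 0) at_top"
proof -
  define I where "I = coded_index n v N"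
  define M where "M = noise_measure I"
  define noise_norm where "noise_norm = (\<lambda>z :: nat \<times> nat \<Rightarrow> real. \<Sum>i\<in>I. \<bar>z i\<bar>)"
  interpret prob_space M
    unfolding M_def by (rule prob_space_noise_measure)
  have "finite I"
    unfolding I_def coded_index_def by simp
  have "random_variable borel noise_norm"
    unfolding noise_norm_def M_def noise_measure_def
    by (intro borel_measurable_sum borel_measurable_abs) measurable
  then have tail: "((\<lambda>gdB. prob {z \<in> space M. sqrt (snr_lin gdB / 2) < noise_norm z}) \<longlongrightarrow> 0) at_top"
    using filterlim_compose[OF tendsto_prob_greater_at_top filterlim_sqrt_snr_lin_at_top] by simp
  have upper: "P_nack n v N p g L c gdB \<le> prob {z \<in> space M. sqrt (snr_lin gdB / 2) < noise_norm z}"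
    for gdB
    unfolding P_nack_def Let_def M_def[symmetric] I_def[symmetric]
  proof (rule finite_measure_mono)
    show "{z \<in> space M. nlva_exceeds n v N p g gdB L (\<lambda>i. modulate gdB g c i + z i)}
            \<subseteq> {z \<in> space M. sqrt (snr_lin gdB / 2) < noise_norm z}"
    proof safe
      fix z assume "nlva_exceeds n v N p g gdB L (\<lambda>i. modulate gdB g c i + z i)"
      then obtain i where "i \<in> I" "sqrt (snr_lin gdB / 2) < \<bar>z i\<bar>"
        using nlva_exceeds_imp_large_noise[OF assms] unfolding I_def by blast
      moreover have "\<bar>z i\<bar> \<le> noise_norm z"
        unfolding noise_norm_def using \<open>finite I\<close> \<open>i \<in> I\<close> by (intro member_le_sum) auto
      ultimately show "sqrt (snr_lin gdB / 2) < noise_norm z" by linarith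
    qed
    show "{z \<in> space M. sqrt (snr_lin gdB / 2) < noise_norm z} \<in> events"
      using \<open>random_variable borel noise_norm\<close> by (simp add: borel_measurable_iff_greater)
  qed
  have lower: "0 \<le> P_nack n v N p g L c gdB" for gdB
    unfolding P_nack_def Let_def by (rule measure_nonneg)
  show ?thesis
    by (rule tendsto_sandwich[OF _ _ tendsto_const tail]) (use lower upper in simp_all)
qed

theorem corollary1:
  fixes k m n v N L :: nat and p :: "bit poly" and g :: "nat \<Rightarrow> bit poly" and d :: "bit poly"
  assumes "n = k + m"
    and "p \<noteq> 0" and "degree p = m"
    and "N \<ge> 1"
    and "\<forall>j<N. degree (g j) \<le> v"
    and "\<exists>j<N. g j \<noteq> 0 \<and> degree (g j) = v"
    and "d \<in> bit_seqs k"
    and "L \<ge> 1"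
  shows "Limsup at_top (\<lambda>gdB. ereal (P_nack n v N p g L (crc_encode p m d) gdB))
           \<le> ereal (1 / real L)"
proof -
  have "crc_encode p m d \<in> bit_seqs n"
    using crc_encode_in_bit_seqs[OF _ assms(7)] assms(1,3) by simp
  then have "((\<lambda>gdB. P_nack n v N p g L (crc_encode p m d) gdB) \<longlongrightarrow> 0) at_top"
    using P_nack_tendsto_zero crc_encode_dvd assms(8) by blast
  then have "Limsup at_top (\<lambda>gdB. ereal (P_nack n v N p g L (crc_encode p m d) gdB)) = ereal 0"
    by (intro lim_imp_Limsup tendsto_ereal) simp_all
  then show ?thesis by simp
qed

end
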